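(* Let $\hat\theta\in[0,\frac{\pi}{2}]$ and $1<\alpha\le 2$. Then $$\sin(\alpha\hat\theta)\ge\sin(\hat\theta)\cos^{\alpha-1}(\hat\theta),$$ where equality holds if and only if $\hat\theta=0$ in the case $1<\alpha<2$, and if and only if $\hat\theta=0$ or $\hat\theta=\frac{\pi}{2}$ in the case $\alpha=2$. *)

theory Defs
  imports Complex_Main
begin

end

theory Submission
  imports Defs "HOL-Analysis.Analysis"
begin

text \<open>Write \<open>\<alpha> = 1 + b\<close> with \<open>0 < b \<le> 1\<close>. Then
  \<open>sin (\<alpha>\<theta>) = sin \<theta> cos (b\<theta>) + cos \<theta> sin (b\<theta>)\<close>. Concavity of \<open>cos\<close> on \<open>[0, \<pi>/2]\<close>
  gives \<open>cos (b\<theta>) \<ge> (1 - b) + b cos \<theta>\<close>, and by weighted AM-GM this is at least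
  \<open>cos\<^sup>b \<theta>\<close>; the second summand is strictly positive for \<open>0 < \<theta> < \<pi>/2\<close>.
  At \<open>\<theta> = \<pi>/2\<close> the right-hand side vanishes and \<open>sin (\<alpha>\<pi>/2) = 0\<close> exactly when \<open>\<alpha> = 2\<close>.\<close>

lemma convex_on_minus_cos: "convex_on {-pi/2..pi/2} (\<lambda>x. - cos x)"
  by (intro f''_ge0_imp_convex derivative_eq_intros | simp add: cos_ge_zero)+

lemma cos_powr_le_cos_mult:
  fixes x t :: real
  assumes "0 \<le> x" "x < pi/2" "0 < t" "t \<le> 1"
  shows "cos x powr t \<le> cos (t * x)"
proof -
  have "cos x > 0"
    using assms by (intro cos_gt_zero_pi) auto
  then have "cos x powr t * 1 powr (1 - t) \<le> t * cos x + (1 - t) * 1"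
    using Youngs_inequality_0[of t "1 - t" "cos x" 1] assms by simp
  also have "\<dots> \<le> cos ((1 - t) *\<^sub>R 0 + t *\<^sub>R x)"
    using convex_onD[OF convex_on_minus_cos, of t 0 x] assms by simp
  finally show ?thesis by simp
qed

lemma sin_mult_gt_sin_cos_powr:
  fixes \<theta> b :: real
  assumes "0 < \<theta>" "\<theta> < pi/2" "0 < b" "b \<le> 1"
  shows "sin ((1 + b) * \<theta>) > sin \<theta> * cos \<theta> powr b"
proof -
  have "cos \<theta> > 0" "sin \<theta> > 0"
    using assms by (auto intro: cos_gt_zero sin_gt_zero)
  have "b * \<theta> \<le> \<theta>"
    using assms by (simp add: mult_left_le_one_le)
  then have "sin (b * \<theta>) > 0"
    using assms by (intro sin_gt_zero) (simp, linarith)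
  have "sin \<theta> * cos \<theta> powr b \<le> sin \<theta> * cos (b * \<theta>)"
    using \<open>sin \<theta> > 0\<close> assms by (intro mult_left_mono cos_powr_le_cos_mult) auto
  also have "\<dots> < sin \<theta> * cos (b * \<theta>) + cos \<theta> * sin (b * \<theta>)"
    using \<open>cos \<theta> > 0\<close> \<open>sin (b * \<theta>) > 0\<close> by simp
  also have "\<dots> = sin ((1 + b) * \<theta>)"
    by (simp add: distrib_right sin_add)
  finally show ?thesis .
qed

theorem lemma2:
  fixes \<theta> \<alpha> :: real
  assumes "0 \<le> \<theta>" and "\<theta> \<le> pi / 2"
    and "1 < \<alpha>" and "\<alpha> \<le> 2"
  shows "sin (\<alpha> * \<theta>) \<ge> sin \<theta> * cos \<theta> powr (\<alpha> - 1)
    \<and> (\<alpha> < 2 \<longrightarrow> (sin (\<alpha> * \<theta>) = sin \<theta> * cos \<theta> powr (\<alpha> - 1) \<longleftrightarrow> \<theta> = 0))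
    \<and> (\<alpha> = 2 \<longrightarrow> (sin (\<alpha> * \<theta>) = sin \<theta> * cos \<theta> powr (\<alpha> - 1) \<longleftrightarrow> \<theta> = 0 \<or> \<theta> = pi / 2))"
proof -
  consider "\<theta> = 0" | "\<theta> = pi/2" | "0 < \<theta>" "\<theta> < pi/2"
    using assms(1,2) by linarith
  then show ?thesis
  proof cases
    case 1
    then show ?thesis by simp
  next
    case 2
    have "\<alpha> * (pi / 2) \<le> pi" "\<alpha> < 2 \<Longrightarrow> \<alpha> * (pi / 2) < pi"
      using assms pi_gt_zero by (simp_all add: field_simps)
    then have "sin (\<alpha> * (pi / 2)) \<ge> 0" "\<alpha> < 2 \<Longrightarrow> sin (\<alpha> * (pi / 2)) > 0"
      using assms by (simp_all add: sin_ge_zero sin_gt_zero)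
    then show ?thesis
      unfolding 2 by auto
  next
    case 3
    then have "sin ((1 + (\<alpha> - 1)) * \<theta>) > sin \<theta> * cos \<theta> powr (\<alpha> - 1)"
      using assms by (intro sin_mult_gt_sin_cos_powr) auto
    then show ?thesis
      using 3 by auto
  qed
qed

end
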